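(* Let $P_1,\dots,P_T$ be $p$-values and fix an index $t\le T$ with $t\in\mathcal H^0$, i.e. $\mathbb P(P_t\le x)\le x$ for all $x\in[0,1]$, and assume $P_t$ is independent of $(P_s)_{s\ne t}$. For each $i\le T$ let $f_i:\{0,1\}^{i-1}\to\mathbb R$ be coordinatewise nondecreasing, define recursively $R_i=\mathbf 1\{P_i\le f_i(R_1,\dots,R_{i-1})\}$, and let $\mathcal F^{i}=\sigma(R_1,\dots,R_{i})$. Let $g:\{0,1\}^T\to\mathbb R$ be coordinatewise nondecreasing with $g(x)>0$ for every $x\neq(0,\dots,0)$. Then $$\mathbb E\left[\frac{\mathbf 1\{P_t\le f_t(R_1,\dots,R_{t-1})\}}{g(R_1,\dots,R_T)\vee 1}\,\Big|\,\mathcal F^{t-1}\right]\le \mathbb E\left[\frac{f_t(R_1,\dots,R_{t-1})}{g(R_1,\dots,R_T)\vee 1}\,\Big|\,\mathcal F^{t-1}\right].$$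
   Context: Coordinatewise nondecreasing means: if $\tilde x_i\ge x_i$ for all coordinates $i$, then the function value at $\tilde x$ is at least the value at $x$. $a\vee b=\max\{a,b\}$.
   Formalization: The threshold $f_t$ takes only nonnegative values on $\{0,1\}^{t-1}$, rather than arbitrary real values. The statement above fails without it. *)

theory Defs
  imports "HOL-Probability.Probability"
begin

(* Coordinatewise order on 0/1-vectors, represented as bool lists of equal length. *)
definition bl_le :: "bool list \<Rightarrow> bool list \<Rightarrow> bool" where
  "bl_le xs ys \<longleftrightarrow> length xs = length ys \<and> (\<forall>i<length xs. xs ! i \<longrightarrow> ys ! i)"

definition coord_mono :: "nat \<Rightarrow> (bool list \<Rightarrow> real) \<Rightarrow> bool" where
  "coord_mono n F \<longleftrightarrow> (\<forall>xs ys. length xs = n \<longrightarrow> bl_le xs ys \<longrightarrow> F xs \<le> F ys)"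

(* Rs P f i \<omega> = [R_1 \<omega>, ..., R_i \<omega>], R_i = 1{P_i \<le> f_i(R_1,...,R_{i-1})} *)
fun Rs :: "(nat \<Rightarrow> 'a \<Rightarrow> real) \<Rightarrow> (nat \<Rightarrow> bool list \<Rightarrow> real) \<Rightarrow> nat \<Rightarrow> 'a \<Rightarrow> bool list" where
  "Rs P f 0 \<omega> = []"
| "Rs P f (Suc i) \<omega> = Rs P f i \<omega> @ [P (Suc i) \<omega> \<le> f (Suc i) (Rs P f i \<omega>)]"

end

theory Submission
  imports Defs
begin

text \<open>Let \<open>R'\<close> be the decision sequence obtained by replacing \<open>P\<^sub>t\<close> with \<open>0\<close>. It is a function
  of \<open>(P\<^sub>s)\<^sub>s\<^sub>\<noteq>\<^sub>t\<close>, hence independent of \<open>P\<^sub>t\<close>; it agrees with \<open>R\<close> before time \<open>t\<close>;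
  by monotonicity of the rules \<open>R \<le> R'\<close> coordinatewise; and \<open>R = R'\<close> on the event \<open>R\<^sub>t = 1\<close>.
  Hence for \<open>A \<in> \<F>\<^sup>t\<^sup>-\<^sup>1\<close> the left integrand times \<open>1\<^sub>A\<close> equals
  \<open>1\<^sub>A 1{P\<^sub>t \<le> f\<^sub>t} / (g(R') \<or> 1)\<close>, where only \<open>P\<^sub>t\<close> is not a function of \<open>R'\<close>.
  Integrating out \<open>P\<^sub>t\<close> by independence and superuniformity bounds its expectation by that of
  \<open>1\<^sub>A f\<^sub>t / (g(R') \<or> 1) \<le> 1\<^sub>A f\<^sub>t / (g(R) \<or> 1)\<close>. An inequality between integrals over all
  sets of \<open>\<F>\<^sup>t\<^sup>-\<^sup>1\<close> is an almost sure inequality of conditional expectations.\<close>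

lemma Rs_length [simp]: "length (Rs P f n \<omega>) = n"
  by (induction n) auto

lemma Rs_take: "m \<le> n \<Longrightarrow> take m (Rs P f n \<omega>) = Rs P f m \<omega>"
  by (induction n) (auto simp: le_Suc_eq)

lemma Rs_nth: "i < n \<Longrightarrow> Rs P f n \<omega> ! i = (P (Suc i) \<omega> \<le> f (Suc i) (Rs P f i \<omega>))"
proof -
  assume "i < n"
  then have "Rs P f n \<omega> ! i = Rs P f (Suc i) \<omega> ! i"
    by (metis Rs_take Suc_leI lessI nth_take)
  then show ?thesis by (simp add: nth_append)
qed

lemma Rs_cong: "(\<And>i. i \<in> {1..n} \<Longrightarrow> P i \<omega> = P' i \<omega>') \<Longrightarrow> Rs P f n \<omega> = Rs P' f n \<omega>'"
  by (induction n) auto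

lemma Rs_fun_upd_below: "n < t \<Longrightarrow> Rs (P(t := Q)) f n \<omega> = Rs P f n \<omega>"
  by (rule Rs_cong) auto

lemma finite_image_Rs: "finite (Rs P f n ` A)"
proof (rule finite_subset)
  show "Rs P f n ` A \<subseteq> {xs. set xs \<subseteq> UNIV \<and> length xs = n}" by auto
qed (rule finite_lists_length_eq, simp)

lemma measurable_Rs:
  assumes "\<And>i. i \<in> {1..n} \<Longrightarrow> P i \<in> borel_measurable N"
  shows "Rs P f n \<in> measurable N (count_space UNIV)"
  using assms
proof (induction n)
  case 0
  have "Rs P f 0 = (\<lambda>_. [])" by auto
  then show ?case by simp
next
  case (Suc n)
  have [measurable]: "P (Suc n) \<in> borel_measurable N" using Suc.prems by simp
  have "(\<lambda>\<omega>. xs @ [P (Suc n) \<omega> \<le> f (Suc n) xs]) \<in> measurable N (count_space UNIV)" for xs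
    by measurable
  moreover have "Rs P f n \<in> measurable N (count_space UNIV)" using Suc by simp
  ultimately have "(\<lambda>\<omega>. Rs P f n \<omega> @ [P (Suc n) \<omega> \<le> f (Suc n) (Rs P f n \<omega>)])
      \<in> measurable N (count_space UNIV)"
    by (rule measurable_compose_countable'[where I = UNIV]) simp
  then show ?case by simp
qed

lemma bl_le_snoc:
  "length xs = length ys \<Longrightarrow> bl_le (xs @ [a]) (ys @ [b]) \<longleftrightarrow> bl_le xs ys \<and> (a \<longrightarrow> b)"
  unfolding bl_le_def by (auto simp: nth_append less_Suc_eq)

lemma bl_le_Rs_fun_upd_zero:
  assumes f_mono: "\<And>i. i \<in> {1..n} \<Longrightarrow> i \<noteq> t \<Longrightarrow> coord_mono (i - 1) (f i)"
    and f_nonneg: "\<And>xs. length xs = t - 1 \<Longrightarrow> 0 \<le> f t xs"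
  shows "bl_le (Rs P f n \<omega>) (Rs (P(t := \<lambda>_. 0)) f n \<omega>)"
  using f_mono
proof (induction n)
  case 0
  show ?case by (simp add: bl_le_def)
next
  case (Suc n)
  let ?P' = "P(t := \<lambda>_. 0)"
  have IH: "bl_le (Rs P f n \<omega>) (Rs ?P' f n \<omega>)" by (rule Suc.IH) (use Suc.prems in simp)
  have "P (Suc n) \<omega> \<le> f (Suc n) (Rs P f n \<omega>) \<longrightarrow> ?P' (Suc n) \<omega> \<le> f (Suc n) (Rs ?P' f n \<omega>)"
  proof (cases "Suc n = t")
    case True
    then show ?thesis using f_nonneg[of "Rs ?P' f n \<omega>"] by auto
  next
    case False
    then have "coord_mono n (f (Suc n))" using Suc.prems[of "Suc n"] by simp
    then show ?thesis using IH False unfolding coord_mono_def by force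
  qed
  then show ?case using IH by (simp only: Rs.simps bl_le_snoc Rs_length simp_thms)
qed

lemma Rs_fun_upd_zero_eq:
  assumes "P t \<omega> \<le> f t (Rs P f (t - 1) \<omega>)" and "0 \<le> f t (Rs P f (t - 1) \<omega>)"
  shows "Rs (P(t := \<lambda>_. 0)) f n \<omega> = Rs P f n \<omega>"
proof (induction n)
  case (Suc n)
  then show ?case using assms by (cases "Suc n = t") auto
qed simp

lemma subalgebra_vimage_algebra:
  "X \<in> measurable M N \<Longrightarrow> subalgebra M (vimage_algebra (space M) X N)"
  unfolding subalgebra_def
  by (auto simp: sets_vimage_algebra2 measurable_space measurable_sets)

lemma (in finite_measure) integrable_comp_finite_range:
  fixes \<phi> :: "'b \<Rightarrow> real"
  assumes [measurable]: "V \<in> measurable M (count_space UNIV)" and fin: "finite (V ` space M)"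
  shows "integrable M (\<lambda>x. \<phi> (V x))"
proof (rule integrable_const_bound)
  show "AE x in M. norm (\<phi> (V x)) \<le> Max ((\<lambda>w. \<bar>\<phi> w\<bar>) ` V ` space M)"
    using fin by (intro AE_I2) (auto intro: Max_ge)
  show "(\<lambda>x. \<phi> (V x)) \<in> borel_measurable M"
    by (rule measurable_compose[OF assms(1)]) simp
qed

lemma (in sigma_finite_subalgebra) real_cond_exp_mono_set_integral:
  assumes f: "integrable M f" and g: "integrable M g"
    and le: "\<And>A. A \<in> sets F \<Longrightarrow> (\<integral>x\<in>A. f x \<partial>M) \<le> (\<integral>x\<in>A. g x \<partial>M)"
  shows "AE x in M. real_cond_exp M F f x \<le> real_cond_exp M F g x"
proof -
  let ?h = "\<lambda>x. g x - f x"
  let ?u = "real_cond_exp M F ?h"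
  have h: "integrable M ?h" using f g by simp
  interpret MF: sigma_finite_measure "restr_to_subalg M F" by (rule sigma_fin_subalg)
  have "AE x in restr_to_subalg M F. 0 \<le> ?u x"
  proof (rule MF.density_nonneg)
    show "integrable (restr_to_subalg M F) ?u"
      using real_cond_exp_int(1)[OF h] by (simp add: integrable_in_subalg[OF subalg])
  next
    fix A assume "A \<in> sets (restr_to_subalg M F)"
    then have A: "A \<in> sets F" by (simp add: sets_restr_to_subalg[OF subalg])
    then have "A \<in> sets M" using subalg by (auto simp: subalgebra_def)
    have "(\<integral>x\<in>A. ?u x \<partial>restr_to_subalg M F) = (\<integral>x\<in>A. ?u x \<partial>M)"
      using A unfolding set_lebesgue_integral_def by (simp add: integral_subalgebra2[OF subalg])
    also have "\<dots> = (\<integral>x\<in>A. ?h x \<partial>M)" by (rule real_cond_exp_intA[OF h A, symmetric])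
    also have "\<dots> = (\<integral>x\<in>A. g x \<partial>M) - (\<integral>x\<in>A. f x \<partial>M)"
      using integrable_mult_indicator[OF \<open>A \<in> sets M\<close> f] integrable_mult_indicator[OF \<open>A \<in> sets M\<close> g]
      by (intro set_integral_diff) (simp_all add: set_integrable_def)
    finally show "0 \<le> (\<integral>x\<in>A. ?u x \<partial>restr_to_subalg M F)" using le[OF A] by simp
  qed
  then have "AE x in M. 0 \<le> ?u x" by (rule AE_restr_to_subalg[OF subalg])
  with real_cond_exp_diff[OF g f] show ?thesis by eventually_elim simp
qed

lemma (in prob_space) integral_superuniform_indep_le:
  fixes X :: "'a \<Rightarrow> real" and W :: "'a \<Rightarrow> 'b" and k c :: "'b \<Rightarrow> real"
  assumes [measurable]: "X \<in> borel_measurable M" "W \<in> measurable M (count_space UNIV)"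
    and fin: "finite (W ` space M)"
    and superunif: "\<And>x. 0 \<le> x \<Longrightarrow> x \<le> 1 \<Longrightarrow> prob {\<omega> \<in> space M. X \<omega> \<le> x} \<le> x"
    and indep: "\<And>x w. prob {\<omega> \<in> space M. X \<omega> \<le> x \<and> W \<omega> = w}
        = prob {\<omega> \<in> space M. X \<omega> \<le> x} * prob {\<omega> \<in> space M. W \<omega> = w}"
    and k_nonneg: "\<And>\<omega>. \<omega> \<in> space M \<Longrightarrow> 0 \<le> k (W \<omega>)"
    and c_nonneg: "\<And>\<omega>. \<omega> \<in> space M \<Longrightarrow> 0 \<le> c (W \<omega>)"
  shows "(\<integral>\<omega>. k (W \<omega>) * of_bool (X \<omega> \<le> c (W \<omega>)) \<partial>M) \<le> (\<integral>\<omega>. k (W \<omega>) * c (W \<omega>) \<partial>M)"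
proof -
  let ?S = "W ` space M"
  define E where "E w = {\<omega> \<in> space M. W \<omega> = w}" for w
  define L where "L x w = {\<omega> \<in> space M. X \<omega> \<le> x \<and> W \<omega> = w}" for x w
  have E_sets: "E w \<in> events" and L_sets: "L x w \<in> events" for w x
    unfolding E_def L_def by measurable
  have prob_L: "prob (L (c w) w) \<le> c w * prob (E w)" if "w \<in> ?S" for w
  proof -
    have c: "0 \<le> c w" using c_nonneg that by blast
    have "prob {\<omega> \<in> space M. X \<omega> \<le> c w} \<le> c w"
      using superunif[OF c] prob_le_1[of "{\<omega> \<in> space M. X \<omega> \<le> c w}"]
      by (cases "c w \<le> 1") linarith+
    then show ?thesis unfolding L_def E_def indep by (simp add: mult_right_mono)
  qed
  have sum_fiber: "(\<Sum>w\<in>?S. indicator (E w) \<omega> * h w) = h (W \<omega>)" if "\<omega> \<in> space M"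
    for \<omega> and h :: "'b \<Rightarrow> real"
    using that fin by (simp add: E_def indicator_def if_distrib[of "\<lambda>a. a * _"] sum.delta)
  have "(\<integral>\<omega>. k (W \<omega>) * of_bool (X \<omega> \<le> c (W \<omega>)) \<partial>M)
      = (\<integral>\<omega>. (\<Sum>w\<in>?S. k w * indicator (L (c w) w) \<omega>) \<partial>M)"
  proof (intro Bochner_Integration.integral_cong refl)
    fix \<omega> assume "\<omega> \<in> space M"
    then have "k (W \<omega>) * of_bool (X \<omega> \<le> c (W \<omega>))
        = (\<Sum>w\<in>?S. indicator (E w) \<omega> * (k w * of_bool (X \<omega> \<le> c w)))"
      by (rule sum_fiber[symmetric])
    also have "\<dots> = (\<Sum>w\<in>?S. k w * indicator (L (c w) w) \<omega>)"
      by (intro sum.cong) (auto simp: L_def E_def indicator_def)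
    finally show "k (W \<omega>) * of_bool (X \<omega> \<le> c (W \<omega>)) = \<dots>" .
  qed
  also have "\<dots> = (\<Sum>w\<in>?S. k w * prob (L (c w) w))"
    using L_sets
    by (subst Bochner_Integration.integral_sum) (auto simp: emeasure_finite less_top[symmetric])
  also have "\<dots> \<le> (\<Sum>w\<in>?S. k w * c w * prob (E w))"
    using prob_L k_nonneg by (auto simp: mult.assoc intro!: sum_mono mult_left_mono)
  also have "\<dots> = (\<integral>\<omega>. (\<Sum>w\<in>?S. indicator (E w) \<omega> * (k w * c w)) \<partial>M)"
    using E_sets
    by (subst Bochner_Integration.integral_sum) (auto simp: mult_ac emeasure_finite less_top[symmetric])
  also have "\<dots> = (\<integral>\<omega>. k (W \<omega>) * c (W \<omega>) \<partial>M)"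
    by (intro Bochner_Integration.integral_cong refl sum_fiber)
  finally show ?thesis .
qed

lemma (in prob_space) prob_indep_Rs_fun_upd_zero:
  assumes indep: "indep_var (Pi\<^sub>M {t} (\<lambda>_. borel)) (\<lambda>\<omega>. \<lambda>s\<in>{t}. P s \<omega>)
      (Pi\<^sub>M ({1..T} - {t}) (\<lambda>_. borel)) (\<lambda>\<omega>. \<lambda>s\<in>{1..T} - {t}. P s \<omega>)"
  shows "prob {\<omega> \<in> space M. P t \<omega> \<le> x \<and> Rs (P(t := \<lambda>_. 0)) f T \<omega> = w}
    = prob {\<omega> \<in> space M. P t \<omega> \<le> x} * prob {\<omega> \<in> space M. Rs (P(t := \<lambda>_. 0)) f T \<omega> = w}"
proof -
  let ?I = "{1..T} - {t}"
  define \<Phi> where "\<Phi> = Rs (\<lambda>s y. if s \<in> ?I then y s else 0) f T"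
  have "\<Phi> \<in> measurable (Pi\<^sub>M ?I (\<lambda>_. borel)) (count_space UNIV)"
    unfolding \<Phi>_def
  proof (rule measurable_Rs)
    fix i
    show "(\<lambda>y. if i \<in> ?I then y i else 0) \<in> borel_measurable (Pi\<^sub>M ?I (\<lambda>_. borel :: real measure))"
      by (cases "i \<in> ?I") (auto intro: measurable_component_singleton)
  qed
  then have Xb: "\<Phi> -` {w} \<inter> space (Pi\<^sub>M ?I (\<lambda>_. borel)) \<in> sets (Pi\<^sub>M ?I (\<lambda>_. borel))"
    by measurable
  have "(\<lambda>y. y t) \<in> borel_measurable (Pi\<^sub>M {t} (\<lambda>_. borel :: real measure))"
    by (rule measurable_component_singleton) simp
  then have Xa: "{y \<in> space (Pi\<^sub>M {t} (\<lambda>_. borel)). y t \<le> x} \<in> sets (Pi\<^sub>M {t} (\<lambda>_. borel))"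
    by measurable
  have \<Phi>_eq: "\<Phi> (\<lambda>s\<in>?I. P s \<omega>) = Rs (P(t := \<lambda>_. 0)) f T \<omega>" for \<omega>
    unfolding \<Phi>_def by (rule Rs_cong) auto
  show ?thesis
    using indep_varD[OF indep Xa Xb] unfolding \<Phi>_eq[symmetric]
    by (simp add: space_PiM Int_def conj_commute)
qed

locale monotone_online_test = prob_space M for M :: "'a measure" +
  fixes P :: "nat \<Rightarrow> 'a \<Rightarrow> real" and f :: "nat \<Rightarrow> bool list \<Rightarrow> real"
    and g :: "bool list \<Rightarrow> real" and T t :: nat
  assumes rv: "\<And>i. i \<in> {1..T} \<Longrightarrow> P i \<in> borel_measurable M"
    and t: "1 \<le> t" "t \<le> T"
    and superunif: "\<And>x. 0 \<le> x \<Longrightarrow> x \<le> 1 \<Longrightarrow> prob {\<omega> \<in> space M. P t \<omega> \<le> x} \<le> x"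
    and indep: "indep_var (Pi\<^sub>M {t} (\<lambda>_. borel)) (\<lambda>\<omega>. \<lambda>s\<in>{t}. P s \<omega>)
        (Pi\<^sub>M ({1..T} - {t}) (\<lambda>_. borel)) (\<lambda>\<omega>. \<lambda>s\<in>{1..T} - {t}. P s \<omega>)"
    and f_mono: "\<And>i. i \<in> {1..T} \<Longrightarrow> coord_mono (i - 1) (f i)"
    and f_nonneg: "\<And>xs. length xs = t - 1 \<Longrightarrow> 0 \<le> f t xs"
    and g_mono: "coord_mono T g"
begin

abbreviation past :: "'a measure" where
  "past \<equiv> vimage_algebra (space M) (Rs P f (t - 1)) (count_space UNIV)"

abbreviation denom :: "'a \<Rightarrow> real" where
  "denom \<omega> \<equiv> max (g (Rs P f T \<omega>)) 1"

lemma measurable_Rs_upto: "n \<le> T \<Longrightarrow> Rs P f n \<in> measurable M (count_space UNIV)"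
  by (rule measurable_Rs) (use rv in auto)

lemma finite_measure_subalgebra_past: "finite_measure_subalgebra M past"
  using t by unfold_locales (intro subalgebra_vimage_algebra measurable_Rs_upto, simp)

lemma Rs_past_eq_take: "Rs P f (t - 1) \<omega> = take (t - 1) (Rs P f T \<omega>)"
  using t by (simp add: Rs_take)

lemma rejection_eq_nth: "(P t \<omega> \<le> f t (Rs P f (t - 1) \<omega>)) = Rs P f T \<omega> ! (t - 1)"
  using t Rs_nth[of "t - 1" T P f \<omega>] by simp

lemma integrable_rejection_ratio:
  "integrable M (\<lambda>\<omega>. of_bool (P t \<omega> \<le> f t (Rs P f (t - 1) \<omega>)) / denom \<omega>)"
  unfolding rejection_eq_nth
  by (rule integrable_comp_finite_range[OF measurable_Rs_upto finite_image_Rs, simplified]) simp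

lemma integrable_level_ratio: "integrable M (\<lambda>\<omega>. f t (Rs P f (t - 1) \<omega>) / denom \<omega>)"
  unfolding Rs_past_eq_take
  by (rule integrable_comp_finite_range[OF measurable_Rs_upto finite_image_Rs, simplified]) simp

lemma set_integral_rejection_ratio_le:
  assumes "A \<in> sets past"
  shows "(\<integral>\<omega>\<in>A. of_bool (P t \<omega> \<le> f t (Rs P f (t - 1) \<omega>)) / denom \<omega> \<partial>M)
    \<le> (\<integral>\<omega>\<in>A. f t (Rs P f (t - 1) \<omega>) / denom \<omega> \<partial>M)"
proof -
  obtain B where A: "A = Rs P f (t - 1) -` B \<inter> space M"
    using assms by (auto simp: sets_vimage_algebra2)
  define W where "W = Rs (P(t := \<lambda>_. 0)) f T"
  define k where "k w = indicator B (take (t - 1) w) / max (g w) 1" for w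
  define c where "c w = f t (take (t - 1) w)" for w
  have W_meas: "W \<in> measurable M (count_space UNIV)"
    unfolding W_def by (rule measurable_Rs) (use rv in auto)
  have c_W: "c (W \<omega>) = f t (Rs P f (t - 1) \<omega>)" for \<omega>
    unfolding c_def W_def using t by (simp add: Rs_take Rs_fun_upd_below)
  have f_nonneg_past: "0 \<le> f t (Rs P f (t - 1) \<omega>)" for \<omega>
    by (rule f_nonneg) simp
  have denom_le: "denom \<omega> \<le> max (g (W \<omega>)) 1" for \<omega>
    using g_mono bl_le_Rs_fun_upd_zero[OF f_mono f_nonneg, of T P \<omega>]
    unfolding coord_mono_def W_def by (simp add: max.coboundedI1)
  have k_W: "k (W \<omega>) = indicator A \<omega> / max (g (W \<omega>)) 1" if "\<omega> \<in> space M" for \<omega>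
    using that unfolding k_def A W_def using t by (simp add: Rs_take Rs_fun_upd_below indicator_def)
  have lhs: "indicator A \<omega> * (of_bool (P t \<omega> \<le> f t (Rs P f (t - 1) \<omega>)) / denom \<omega>)
      = k (W \<omega>) * of_bool (P t \<omega> \<le> c (W \<omega>))" if "\<omega> \<in> space M" for \<omega>
  proof (cases "P t \<omega> \<le> f t (Rs P f (t - 1) \<omega>)")
    case True
    then have "W \<omega> = Rs P f T \<omega>"
      unfolding W_def by (rule Rs_fun_upd_zero_eq) (rule f_nonneg_past)
    then show ?thesis using True k_W[OF that] c_W[of \<omega>] by simp
  qed (simp add: c_W)
  have rhs: "k (W \<omega>) * c (W \<omega>) \<le> indicator A \<omega> * (f t (Rs P f (t - 1) \<omega>) / denom \<omega>)"
    if "\<omega> \<in> space M" for \<omega>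
    using that f_nonneg_past[of \<omega>] denom_le[of \<omega>]
    by (auto simp: k_W c_W indicator_def intro: divide_left_mono)
  have "(\<integral>\<omega>\<in>A. of_bool (P t \<omega> \<le> f t (Rs P f (t - 1) \<omega>)) / denom \<omega> \<partial>M)
      = (\<integral>\<omega>. k (W \<omega>) * of_bool (P t \<omega> \<le> c (W \<omega>)) \<partial>M)"
    unfolding set_lebesgue_integral_def real_scaleR_def
    by (rule Bochner_Integration.integral_cong[OF refl lhs])
  also have "\<dots> \<le> (\<integral>\<omega>. k (W \<omega>) * c (W \<omega>) \<partial>M)"
  proof (rule integral_superuniform_indep_le)
    show "P t \<in> borel_measurable M" using rv t by simp
    show "finite (W ` space M)" unfolding W_def by (rule finite_image_Rs)
    show "prob {\<omega> \<in> space M. P t \<omega> \<le> x \<and> W \<omega> = w}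
        = prob {\<omega> \<in> space M. P t \<omega> \<le> x} * prob {\<omega> \<in> space M. W \<omega> = w}" for x w
      unfolding W_def by (rule prob_indep_Rs_fun_upd_zero[OF indep])
    show "0 \<le> k (W \<omega>)" for \<omega> unfolding k_def by simp
    show "0 \<le> c (W \<omega>)" for \<omega> unfolding c_W by (rule f_nonneg_past)
  qed (use W_meas superunif in auto)
  also have "\<dots> \<le> (\<integral>\<omega>\<in>A. f t (Rs P f (t - 1) \<omega>) / denom \<omega> \<partial>M)"
    unfolding set_lebesgue_integral_def
  proof (rule integral_mono)
    show "integrable M (\<lambda>\<omega>. k (W \<omega>) * c (W \<omega>))"
      using W_meas by (rule integrable_comp_finite_range) (simp add: W_def finite_image_Rs)
    have "A \<in> sets M"
      unfolding A using measurable_sets[OF measurable_Rs_upto[of "t - 1"], of B] t by simp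
    then show "integrable M (\<lambda>\<omega>. indicator A \<omega> *\<^sub>R (f t (Rs P f (t - 1) \<omega>) / denom \<omega>))"
      by (rule integrable_mult_indicator) (rule integrable_level_ratio)
  qed (use rhs in simp)
  finally show ?thesis .
qed

end

theorem lemma1:
  fixes M :: "'a measure" and P :: "nat \<Rightarrow> 'a \<Rightarrow> real"
    and f :: "nat \<Rightarrow> bool list \<Rightarrow> real" and g :: "bool list \<Rightarrow> real"
    and T t :: nat
  assumes "prob_space M"
    and rv: "\<And>i. i \<in> {1..T} \<Longrightarrow> P i \<in> borel_measurable M"
    and t: "1 \<le> t" "t \<le> T"
    and superunif: "\<And>x. 0 \<le> x \<Longrightarrow> x \<le> 1 \<Longrightarrow>
        measure M {\<omega> \<in> space M. P t \<omega> \<le> x} \<le> x"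
    and indep: "prob_space.indep_var M (Pi\<^sub>M {t} (\<lambda>_. borel)) (\<lambda>\<omega>. \<lambda>s\<in>{t}. P s \<omega>)
        (Pi\<^sub>M ({1..T} - {t}) (\<lambda>_. borel)) (\<lambda>\<omega>. \<lambda>s\<in>{1..T} - {t}. P s \<omega>)"
    and f_mono: "\<And>i. i \<in> {1..T} \<Longrightarrow> coord_mono (i - 1) (f i)"
    and f_nonneg: "\<And>xs. length xs = t - 1 \<Longrightarrow> 0 \<le> f t xs"
    and g_mono: "coord_mono T g"
    and g_pos: "\<And>xs. length xs = T \<Longrightarrow> True \<in> set xs \<Longrightarrow> g xs > 0"
  shows "AE \<omega> in M.
    real_cond_exp M (vimage_algebra (space M) (Rs P f (t - 1)) (count_space UNIV))
      (\<lambda>\<omega>. of_bool (P t \<omega> \<le> f t (Rs P f (t - 1) \<omega>)) / max (g (Rs P f T \<omega>)) 1) \<omega>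
    \<le> real_cond_exp M (vimage_algebra (space M) (Rs P f (t - 1)) (count_space UNIV))
      (\<lambda>\<omega>. f t (Rs P f (t - 1) \<omega>) / max (g (Rs P f T \<omega>)) 1) \<omega>"
proof -
  interpret monotone_online_test M P f g T t
    using assms unfolding monotone_online_test_def monotone_online_test_axioms_def by simp
  interpret finite_measure_subalgebra M past
    by (rule finite_measure_subalgebra_past)
  show ?thesis
    using integrable_rejection_ratio integrable_level_ratio set_integral_rejection_ratio_le
    by (rule real_cond_exp_mono_set_integral)
qed

end
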